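(* Let $P=\sum_{k=1}^K N_k$, $\kappa=2P$, and assume $N_I\ge\kappa$; write $N=N_I$. Let $\mathbf U\in\bar{\mathcal U}$ be such that every square submatrix of $\mathbf M_{\mathbf U}$ is nonsingular. Let $\mathbf a_n^T$ and $\mathbf b_n^T$ ($n=1,\dots,N$) be the rows of $\mathbf M_{\mathbf U}$ and $\boldsymbol\Gamma_{\mathbf U}$, respectively, let $\mathbf A$ be the block matrix $[\mathbf A_{m,n}]_{m,n=1}^N$ with $\mathbf A_{m,n}\in\mathbb R^{\kappa\times\min\{\kappa,N-n+1\}}$, whose $q$-th column is $\mathbf a_{q+n-1}$ if $m=n$, $\mathbf a_n$ if $m=q+n-1\neq n$, and $\mathbf 0$ otherwise, and let $\mathbf b=[\mathbf b_1^T,\dots,\mathbf b_N^T]^T\in\mathbb R^{N\kappa}$. Then $$\operatorname{rank}([\mathbf A\ \ \mathbf b])=N\kappa-\frac{\kappa(\kappa-1)}{2}.$$ (In particular, together with $\operatorname{rank}\mathbf A=N\kappa-\kappa(\kappa-1)/2$, the system $\mathbf A\mathbf x=\mathbf b$ is solvable.)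
   Context: $Z_0>0$, $\mathbf H_r\in\mathbb C^{P\times N_I}$ is arbitrary, $\mathsf i$ is the imaginary unit, and $\mathcal R(\cdot),\mathcal I(\cdot)$ denote entrywise real and imaginary parts. $\bar{\mathcal U}=\{\mathbf U\in\mathbb C^{N_I\times P}:\ \mathbf U^H\mathbf U=\mathbf H_r\mathbf H_r^H,\ \mathbf U^T\mathbf H_r^H=(\mathbf U^T\mathbf H_r^H)^T\}$. For $\mathbf U\in\mathbb C^{N_I\times P}$, $\mathbf M_{\mathbf U}=[\mathcal R(\mathsf iZ_0(\mathbf H_r^H+\mathbf U))\ \ \mathcal I(\mathsf iZ_0(\mathbf H_r^H+\mathbf U))]\in\mathbb R^{N_I\times 2P}$ and $\boldsymbol\Gamma_{\mathbf U}=[\mathcal R(\mathbf U-\mathbf H_r^H)\ \ \mathcal I(\mathbf U-\mathbf H_r^H)]\in\mathbb R^{N_I\times 2P}$. The matrix $\mathbf A$ has $N\kappa$ rows and $N\kappa-\kappa(\kappa-1)/2$ columns; its column indexed by block $n$ and position $q$ corresponds to the variable $B_{n,n+q-1}$ of a real symmetric band matrix $\mathbf B$ with band width $\kappa-1$, and $\mathbf A\mathbf x=\mathbf b$ is the equation $\mathbf B\mathbf M_{\mathbf U}=\boldsymbol\Gamma_{\mathbf U}$ written row by row. *)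

theory Defs
  imports "Jordan_Normal_Form.Schur_Decomposition" "Jordan_Normal_Form.DL_Rank"
    "Jordan_Normal_Form.DL_Submatrix"
begin

definition Ubar_set :: "complex mat \<Rightarrow> complex mat set" where
  "Ubar_set Hr = {U. U \<in> carrier_mat (dim_col Hr) (dim_row Hr)
      \<and> mat_adjoint U * U = Hr * mat_adjoint Hr
      \<and> transpose_mat U * mat_adjoint Hr = transpose_mat (transpose_mat U * mat_adjoint Hr)}"

definition M_mat :: "real \<Rightarrow> complex mat \<Rightarrow> complex mat \<Rightarrow> real mat" where
  "M_mat Z0 Hr U = (let P = dim_row Hr; C = mat_adjoint Hr + U in
     mat (dim_row C) (2 * P) (\<lambda>(n, j).
       if j < P then Re (\<i> * complex_of_real Z0 * C $$ (n, j))
       else Im (\<i> * complex_of_real Z0 * C $$ (n, j - P))))"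

definition Gamma_mat :: "complex mat \<Rightarrow> complex mat \<Rightarrow> real mat" where
  "Gamma_mat Hr U = (let P = dim_row Hr; C = U - mat_adjoint Hr in
     mat (dim_row C) (2 * P) (\<lambda>(n, j).
       if j < P then Re (C $$ (n, j)) else Im (C $$ (n, j - P))))"

text \<open>Column q (0-indexed) of block column n (0-indexed) of A: its block row m
  (rows m*kappa .. m*kappa+kappa-1) is a_{q+n} if m = n, a_n if m = q+n (and m ~= n),
  and 0 otherwise, where a_i is the i-th row of M (0-indexed).\<close>
definition A_col :: "nat \<Rightarrow> nat \<Rightarrow> real mat \<Rightarrow> nat \<Rightarrow> nat \<Rightarrow> real vec" where
  "A_col \<kappa> N M n q = vec (N * \<kappa>) (\<lambda>r. let m = r div \<kappa>; p = r mod \<kappa> in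
      if m = n then M $$ (q + n, p) else if m = q + n then M $$ (n, p) else 0)"

definition A_mat :: "nat \<Rightarrow> nat \<Rightarrow> real mat \<Rightarrow> real mat" where
  "A_mat \<kappa> N M = mat_of_cols (N * \<kappa>)
     (concat (map (\<lambda>n. map (\<lambda>q. A_col \<kappa> N M n q) [0..<min \<kappa> (N - n)]) [0..<N]))"

definition b_vec :: "nat \<Rightarrow> nat \<Rightarrow> real mat \<Rightarrow> real vec" where
  "b_vec \<kappa> N G = vec (N * \<kappa>) (\<lambda>r. G $$ (r div \<kappa>, r mod \<kappa>))"

end

theory Submission
  imports Defs
begin

(* Read vectors of length N*\<kappa> as N x \<kappa> matrices V in row-major order. Then A x = b says
   B M = Gamma for the real symmetric band matrix B encoded by x. The columns of A are independent
   because the system is block triangular, with consecutive row blocks of M as nonsingular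
   diagonal blocks. For i < j the functional V \<mapsto> (M^T V)_ij - (M^T V)_ji vanishes on every
   column of A, since M^T B M is symmetric, and on b, since U \<in> bar U makes M^T Gamma symmetric.
   A left inverse of the leading \<kappa> x \<kappa> block of M yields a dual family, so these
   \<kappa>(\<kappa>-1)/2 functionals are independent; their common kernel then has the dimension of
   the column space of A, hence coincides with it and contains b. *)

lemma distinct_cols_if_kernel_trivial:
  fixes A :: "'a :: field mat"
  assumes A: "A \<in> carrier_mat n c"
    and indep: "\<And>v. v \<in> carrier_vec c \<Longrightarrow> A *\<^sub>v v = 0\<^sub>v n \<Longrightarrow> v = 0\<^sub>v c"
  shows "distinct (cols A)"
proof (rule ccontr)
  assume "\<not> distinct (cols A)"
  then obtain i j where ij: "i < c" "j < c" "i \<noteq> j" "col A i = col A j"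
    using A by (auto simp: distinct_conv_nth)
  define v :: "'a vec" where "v = unit_vec c i - unit_vec c j"
  have col: "A *\<^sub>v unit_vec c k = col A k" if "k < c" for k
    using A that by (intro eq_vecI) (auto simp: col_def)
  have "A *\<^sub>v v = col A i - col A j"
    unfolding v_def using A ij by (simp add: mult_minus_distrib_mat_vec col)
  then have "A *\<^sub>v v = 0\<^sub>v n" using ij A by (metis minus_cancel_vec col_dim carrier_matD(1))
  then have "v = 0\<^sub>v c" using indep unfolding v_def by simp
  moreover have "v $ i = 1" using ij unfolding v_def by simp
  ultimately show False using ij(1) by simp
qed

lemma rank_mat_of_cols_append_mult_mat_vec:
  fixes A :: "'a :: field mat"
  assumes A: "A \<in> carrier_mat n c"
    and indep: "\<And>v. v \<in> carrier_vec c \<Longrightarrow> A *\<^sub>v v = 0\<^sub>v n \<Longrightarrow> v = 0\<^sub>v c"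
    and \<alpha>: "\<alpha> \<in> carrier_vec c"
  shows "vec_space.rank n (mat_of_cols n (cols A @ [A *\<^sub>v \<alpha>])) = c"
proof -
  interpret vec_space "TYPE('a)" n .
  have dist: "distinct (cols A)" by (rule distinct_cols_if_kernel_trivial[OF A indep])
  have "lin_indpt (set (cols A))"
  proof
    assume "lin_dep (set (cols A))"
    from lin_depE[OF A this dist] obtain v where "v \<in> carrier_vec c" "v \<noteq> 0\<^sub>v c" "A *\<^sub>v v = 0\<^sub>v n" .
    then show False using indep by blast
  qed
  then have rank_A: "rank A = c" by (rule lin_indpt_full_rank[OF A dist])
  have cols_A: "set (cols A) \<subseteq> carrier_vec n" using A by (auto simp: cols_def)
  have "A *\<^sub>v \<alpha> = lincomb (\<lambda>a. \<alpha> $ find_first a (cols A)) (set (cols A))"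
    by (rule lincomb_eq_mat_mult[OF A \<alpha> dist, symmetric])
  then have "A *\<^sub>v \<alpha> \<in> span (set (cols A))" unfolding span_def by auto
  then have "span (set (cols A @ [A *\<^sub>v \<alpha>])) = span (set (cols A))"
    using already_in_span[OF cols_A] by simp
  moreover have "cols (mat_of_cols n (cols A @ [A *\<^sub>v \<alpha>])) = cols A @ [A *\<^sub>v \<alpha>]"
    using cols_A A \<alpha> by (intro cols_mat_of_cols) auto
  ultimately show ?thesis using rank_A unfolding rank_def by simp
qed

lemma exists_mult_mat_vec_eq_if_kernel_trivial:
  fixes E :: "'a :: field mat"
  assumes E: "E \<in> carrier_mat n n"
    and inj: "\<And>z. z \<in> carrier_vec n \<Longrightarrow> E *\<^sub>v z = 0\<^sub>v n \<Longrightarrow> z = 0\<^sub>v n"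
    and b: "b \<in> carrier_vec n"
  shows "\<exists>z \<in> carrier_vec n. E *\<^sub>v z = b"
proof -
  have "det E \<noteq> 0" using det_0_iff_vec_prod_zero_field[OF E] inj by blast
  from det_non_zero_imp_unit[OF E this, of undefined]
  obtain G where G: "G \<in> carrier_mat n n" "E * G = 1\<^sub>m n"
    unfolding Units_def ring_mat_def by auto
  have "E *\<^sub>v (G *\<^sub>v b) = b"
    using G E b by (simp add: assoc_mult_mat_vec[symmetric])
  moreover have "G *\<^sub>v b \<in> carrier_vec n" using G b by simp
  ultimately show ?thesis by blast
qed

lemma exists_mult_mat_vec_eq_if_annihilated:
  fixes A X F :: "'a :: field mat"
  assumes A: "A \<in> carrier_mat n c" and X: "X \<in> carrier_mat n d" and F: "F \<in> carrier_mat d n"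
    and n: "n = c + d" and FA: "F * A = 0\<^sub>m d c" and FX: "F * X = 1\<^sub>m d"
    and indep: "\<And>v. v \<in> carrier_vec c \<Longrightarrow> A *\<^sub>v v = 0\<^sub>v n \<Longrightarrow> v = 0\<^sub>v c"
    and b: "b \<in> carrier_vec n" and Fb: "F *\<^sub>v b = 0\<^sub>v d"
  shows "\<exists>\<alpha> \<in> carrier_vec c. b = A *\<^sub>v \<alpha>"
proof -
  define E where "E = four_block_mat A X (0\<^sub>m 0 c) (0\<^sub>m 0 d)"
  have E: "E \<in> carrier_mat n n" unfolding E_def n using A X n by auto
  have X0: "X *\<^sub>v 0\<^sub>v d = 0\<^sub>v n" using X by (intro eq_vecI) auto
  have split: "z = vec_first z c @\<^sub>v vec_last z d" if "z \<in> carrier_vec n" for z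
    using that n by simp
  have E_split: "E *\<^sub>v z = A *\<^sub>v vec_first z c + X *\<^sub>v vec_last z d" if "z \<in> carrier_vec n" for z
  proof -
    have "E *\<^sub>v z = (A *\<^sub>v vec_first z c + X *\<^sub>v vec_last z d)
        @\<^sub>v (0\<^sub>m 0 c *\<^sub>v vec_first z c + 0\<^sub>m 0 d *\<^sub>v vec_last z d)"
      unfolding E_def by (subst split[OF that], rule four_block_mat_mult_vec[OF A X]) auto
    also have "\<dots> = A *\<^sub>v vec_first z c + X *\<^sub>v vec_last z d" using A X by (intro eq_vecI) auto
    finally show ?thesis .
  qed
  have F_split: "F *\<^sub>v (A *\<^sub>v v + X *\<^sub>v w) = w"
    if "v \<in> carrier_vec c" "w \<in> carrier_vec d" for v w
  proof -
    have "F *\<^sub>v (A *\<^sub>v v + X *\<^sub>v w) = (F * A) *\<^sub>v v + (F * X) *\<^sub>v w"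
      using that A X F by (simp add: mult_add_distrib_mat_vec assoc_mult_mat_vec)
    moreover have "0\<^sub>m d c *\<^sub>v v = 0\<^sub>v d" using that by (intro eq_vecI) auto
    ultimately show ?thesis using that by (simp add: FA FX)
  qed
  have "z = 0\<^sub>v n" if z: "z \<in> carrier_vec n" "E *\<^sub>v z = 0\<^sub>v n" for z
  proof -
    have Ez: "A *\<^sub>v vec_first z c + X *\<^sub>v vec_last z d = 0\<^sub>v n" using z E_split by simp
    moreover have "F *\<^sub>v 0\<^sub>v n = 0\<^sub>v d" using F by (intro eq_vecI) auto
    ultimately have w: "vec_last z d = 0\<^sub>v d" using F_split[of "vec_first z c" "vec_last z d"] by simp
    then have "A *\<^sub>v vec_first z c = 0\<^sub>v n" using Ez A X0 by simp
    then have "vec_first z c = 0\<^sub>v c" by (intro indep) simp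
    with w have "vec_first z c @\<^sub>v vec_last z d = 0\<^sub>v n" using n by (intro eq_vecI) auto
    then show ?thesis by (rule trans[OF split[OF z(1)]])
  qed
  from exists_mult_mat_vec_eq_if_kernel_trivial[OF E this b]
  obtain z where z: "z \<in> carrier_vec n" "E *\<^sub>v z = b" by blast
  then have b_eq: "b = A *\<^sub>v vec_first z c + X *\<^sub>v vec_last z d"
    using E_split by simp
  then have "vec_last z d = 0\<^sub>v d" using F_split Fb by simp
  then have "b = A *\<^sub>v vec_first z c" using b_eq A X0 by simp
  then show ?thesis using vec_first_carrier by blast
qed

definition block_vec :: "nat \<Rightarrow> nat \<Rightarrow> (nat \<Rightarrow> nat \<Rightarrow> 'a) \<Rightarrow> 'a vec" where
  "block_vec k N f = vec (N * k) (\<lambda>r. f (r div k) (r mod k))"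

lemma block_index_less: "m < N \<Longrightarrow> p < k \<Longrightarrow> m * k + p < N * (k :: nat)"
proof -
  assume "m < N" "p < k"
  then have "(m + 1) * k \<le> N * k" by (intro mult_right_mono) auto
  with \<open>p < k\<close> show ?thesis by simp
qed

lemma block_vec_carrier [simp]: "block_vec k N f \<in> carrier_vec (N * k)"
  unfolding block_vec_def by simp

lemma index_block_vec [simp]: "m < N \<Longrightarrow> p < k \<Longrightarrow> block_vec k N f $ (m * k + p) = f m p"
  unfolding block_vec_def using block_index_less by simp

lemma sum_lessThan_mult: "(\<Sum>r < N * k. g r) = (\<Sum>m < N. \<Sum>p < k. g (m * k + (p :: nat)))"
proof -
  have "(\<Sum>r\<in>{m * k..<m * k + k}. g r) = (\<Sum>p<k. g (m * k + p))" for m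
    by (rule sum.reindex_bij_witness[where j = "\<lambda>r. r - m * k" and i = "\<lambda>p. m * k + p"]) auto
  then show ?thesis by (simp flip: sum.nat_group)
qed

lemma scalar_prod_block_vec:
  "v \<in> carrier_vec (N * k) \<Longrightarrow>
    block_vec k N f \<bullet> v = (\<Sum>m < N. \<Sum>p < k. f m p * v $ (m * k + p))"
  by (simp add: scalar_prod_def atLeast0LessThan sum_lessThan_mult)

lemma A_col_eq_block_vec:
  "A_col k N M n q = block_vec k N (\<lambda>m p.
     if m = n then M $$ (q + n, p) else if m = q + n then M $$ (n, p) else 0)"
  unfolding A_col_def block_vec_def Let_def ..

lemma b_vec_eq_block_vec: "b_vec k N G = block_vec k N (\<lambda>m p. G $$ (m, p))"
  unfolding b_vec_def block_vec_def ..

definition band_positions :: "nat \<Rightarrow> nat \<Rightarrow> (nat \<times> nat) list" where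
  "band_positions k N = concat (map (\<lambda>n. map (Pair n) [0..<min k (N - n)]) [0..<N])"

definition strict_upper_pairs :: "nat \<Rightarrow> (nat \<times> nat) list" where
  "strict_upper_pairs k = concat (map (\<lambda>j. map (\<lambda>i. (i, j)) [0..<j]) [0..<k])"

lemma set_band_positions: "set (band_positions k N) = {(n, q). n < N \<and> q < min k (N - n)}"
  unfolding band_positions_def by auto

lemma set_strict_upper_pairs: "set (strict_upper_pairs k) = {(i, j). i < j \<and> j < k}"
  unfolding strict_upper_pairs_def by auto

lemma distinct_band_positions: "distinct (band_positions k N)"
proof -
  have "distinct (concat (map (\<lambda>n. map (Pair n) [0..<f n]) [0..<L]))" for f L
    by (induction L) (auto simp: distinct_map inj_on_def)
  then show ?thesis unfolding band_positions_def .
qed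

lemma distinct_strict_upper_pairs: "distinct (strict_upper_pairs k)"
proof -
  have "distinct (concat (map (\<lambda>j. map (\<lambda>i. (i, j)) [0..<f j]) [0..<L]))" for f L
    by (induction L) (auto simp: distinct_map inj_on_def)
  then show ?thesis unfolding strict_upper_pairs_def .
qed

lemma length_strict_upper_pairs: "length (strict_upper_pairs k) = k * (k - 1) div 2"
proof -
  have "length (strict_upper_pairs k) = \<Sum>{0..<k}"
    unfolding strict_upper_pairs_def
    by (simp add: length_concat comp_def sum_list_distinct_conv_sum_set)
  then show ?thesis by (simp add: Sum_Ico_nat)
qed

lemma length_band_positions:
  assumes "k \<le> N"
  shows "length (band_positions k N) + k * (k - 1) div 2 = N * k"
proof -
  have min_eq: "min k (N - n) = (\<Sum>q<k. if n + q < N then 1 else 0)" for n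
  proof -
    have "{..<k} \<inter> {q. n + q < N} = {..<min k (N - n)}" by auto
    then show ?thesis by (simp add: sum.If_cases)
  qed
  have "length (band_positions k N) = (\<Sum>n<N. min k (N - n))"
    unfolding band_positions_def
    by (simp add: length_concat comp_def sum_list_distinct_conv_sum_set atLeast0LessThan)
  also have "\<dots> = (\<Sum>q<k. \<Sum>n<N. if n + q < N then 1 else 0)"
    unfolding min_eq by (rule sum.swap)
  also have "\<dots> = (\<Sum>q<k. N - q)"
  proof (rule sum.cong)
    fix q
    have "{..<N} \<inter> {n. n + q < N} = {..<N - q}" by auto
    then show "(\<Sum>n<N. if n + q < N then 1 else 0) = N - q" by (simp add: sum.If_cases)
  qed simp
  finally have "length (band_positions k N) + (\<Sum>q<k. q) = (\<Sum>q<k. N - q + q)"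
    by (simp add: sum.distrib)
  also have "\<dots> = N * k" using assms by simp
  finally show ?thesis by (simp add: Sum_Ico_nat atLeast0LessThan[symmetric])
qed

lemma cols_A_mat: "cols (A_mat k N M) = map (\<lambda>(n, q). A_col k N M n q) (band_positions k N)"
proof -
  have "set (concat (map (\<lambda>n. map (A_col k N M n) [0..<min k (N - n)]) [0..<N])) \<subseteq> carrier_vec (N * k)"
    by (auto simp: A_col_def)
  then show ?thesis unfolding A_mat_def band_positions_def by (simp add: map_concat comp_def)
qed

lemma A_mat_carrier: "A_mat k N M \<in> carrier_mat (N * k) (length (band_positions k N))"
proof -
  have "dim_col (A_mat k N M) = length (band_positions k N)"
    using arg_cong[OF cols_A_mat, of length] by simp
  then show ?thesis unfolding A_mat_def by (simp add: carrier_matI)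
qed

lemma index_A_mat:
  assumes "r < N * k" and "t < length (band_positions k N)"
  shows "A_mat k N M $$ (r, t) = (case band_positions k N ! t of (n, q) \<Rightarrow> A_col k N M n q) $ r"
proof -
  have "A_mat k N M $$ (r, t) = cols (A_mat k N M) ! t $ r"
    using A_mat_carrier[of k N M] assms by simp
  then show ?thesis using assms(2) by (simp add: cols_A_mat)
qed

lemma det_nonzero_imp_rows_independent:
  fixes f :: "nat \<times> nat \<Rightarrow> 'a :: field"
  assumes det: "det (mat a a f) \<noteq> 0"
    and comb: "\<And>j. j < a \<Longrightarrow> (\<Sum>q < a. y q * f (q, j)) = 0"
    and q: "q < a"
  shows "y q = 0"
proof -
  let ?T = "transpose_mat (mat a a f)"
  have T: "?T \<in> carrier_mat a a" by simp
  have "det ?T \<noteq> 0" using det by (subst det_transpose) auto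
  moreover have "?T *\<^sub>v vec a y = 0\<^sub>v a"
    using comb by (intro eq_vecI) (auto simp: scalar_prod_def atLeast0LessThan mult.commute)
  ultimately have "vec a y = 0\<^sub>v a"
    using det_0_iff_vec_prod_zero_field[OF T] by (metis vec_carrier)
  then show ?thesis using q by (metis index_vec index_zero_vec(1))
qed

lemma index_A_col:
  "m < N \<Longrightarrow> p < k \<Longrightarrow> A_col k N M n q $ (m * k + p) =
    (if m = n then M $$ (q + n, p) else if m = q + n then M $$ (n, p) else 0)"
  unfolding A_col_eq_block_vec by simp

lemma sum_band_positions_row:
  assumes "m < N"
  shows "(\<Sum>(n, q) \<in> set (band_positions k N). if n = m then g q else 0) = (\<Sum>q < min k (N - m). g q)"
proof -
  have "{p \<in> set (band_positions k N). fst p = m} = Pair m ` {..<min k (N - m)}"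
    using assms by (auto simp: set_band_positions)
  then show ?thesis by (simp add: case_prod_beta sum.If_cases Int_def sum.reindex inj_on_def)
qed

lemma band_combination_eq_0_imp_coeffs_0:
  fixes M :: "real mat"
  assumes minors: "\<And>m a. m + a \<le> N \<Longrightarrow> a \<le> k \<Longrightarrow> det (mat a a (\<lambda>(i, j). M $$ (m + i, j))) \<noteq> 0"
    and comb: "\<And>r. r < N * k \<Longrightarrow>
      (\<Sum>(n, q) \<in> set (band_positions k N). y (n, q) * A_col k N M n q $ r) = 0"
  shows "\<forall>(n, q) \<in> set (band_positions k N). y (n, q) = 0"
proof -
  have "\<forall>q < min k (N - m). y (m, q) = 0" if "m < N" for m
    using that
  proof (induction m rule: less_induct)
    case (less m)
    let ?a = "min k (N - m)"
    have row: "(\<Sum>q < ?a. y (m, q) * M $$ (m + q, j)) = 0" if j: "j < ?a" for j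
    proof -
      have "0 = (\<Sum>(n, q) \<in> set (band_positions k N). y (n, q) * A_col k N M n q $ (m * k + j))"
        using comb block_index_less[OF less.prems] j by simp
      also have "\<dots> = (\<Sum>(n, q) \<in> set (band_positions k N). if n = m then y (m, q) * M $$ (m + q, j) else 0)"
      proof (rule sum.cong[OF refl], clarify)
        fix n q assume "(n, q) \<in> set (band_positions k N)"
        then show "y (n, q) * A_col k N M n q $ (m * k + j) = (if n = m then y (m, q) * M $$ (m + q, j) else 0)"
          using less.IH[of n] less.prems index_A_col[OF less.prems, of j k M n q] j
          by (cases n m rule: linorder_cases) (auto simp: set_band_positions add.commute)
      qed
      also have "\<dots> = (\<Sum>q < ?a. y (m, q) * M $$ (m + q, j))"
        by (rule sum_band_positions_row[OF less.prems])
      finally show ?thesis by simp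
    qed
    have "det (mat ?a ?a (\<lambda>(i, j). M $$ (m + i, j))) \<noteq> 0"
      using minors less.prems by simp
    then show ?case
      using det_nonzero_imp_rows_independent[of ?a "\<lambda>(i, j). M $$ (m + i, j)" "\<lambda>q. y (m, q)"] row
      by simp
  qed
  then show ?thesis by (auto simp: set_band_positions)
qed

lemma A_mat_mult_vec_eq_0_imp_eq_0:
  fixes M :: "real mat"
  assumes minors: "\<And>m a. m + a \<le> N \<Longrightarrow> a \<le> k \<Longrightarrow> det (mat a a (\<lambda>(i, j). M $$ (m + i, j))) \<noteq> 0"
    and v: "v \<in> carrier_vec (length (band_positions k N))"
    and Av: "A_mat k N M *\<^sub>v v = 0\<^sub>v (N * k)"
  shows "v = 0\<^sub>v (length (band_positions k N))"
proof -
  let ?L = "band_positions k N"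
  define y where "y p = v $ find_first p ?L" for p
  have y: "y (?L ! t) = v $ t" if "t < length ?L" for t
    unfolding y_def using find_first_unique[OF distinct_band_positions that] by simp
  have "(\<Sum>(n, q) \<in> set ?L. y (n, q) * A_col k N M n q $ r) = 0" if r: "r < N * k" for r
  proof -
    have "(\<Sum>(n, q) \<in> set ?L. y (n, q) * A_col k N M n q $ r)
        = (\<Sum>t < length ?L. v $ t * (case ?L ! t of (n, q) \<Rightarrow> A_col k N M n q) $ r)"
      by (rule sum.reindex_bij_witness[where i = "\<lambda>t. ?L ! t" and j = "\<lambda>p. find_first p ?L"])
        (auto simp: find_first_le nth_find_first find_first_unique[OF distinct_band_positions]
          y_def split: prod.splits)
    also have "\<dots> = (A_mat k N M *\<^sub>v v) $ r"
      using A_mat_carrier[of k N M] v r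
      by (simp add: scalar_prod_def atLeast0LessThan index_A_mat mult.commute)
    finally show ?thesis using Av r by simp
  qed
  then have "\<forall>(n, q) \<in> set ?L. y (n, q) = 0"
    by (intro band_combination_eq_0_imp_coeffs_0[OF minors]) blast
  then show ?thesis using v y by (intro eq_vecI) auto
qed

definition skew_vec :: "nat \<Rightarrow> nat \<Rightarrow> 'a :: comm_ring_1 mat \<Rightarrow> nat \<times> nat \<Rightarrow> 'a vec" where
  "skew_vec k N M = (\<lambda>(i, j). block_vec k N (\<lambda>m p.
     (if p = j then M $$ (m, i) else 0) - (if p = i then M $$ (m, j) else 0)))"

lemma skew_vec_scalar_prod:
  assumes "v \<in> carrier_vec (N * k)" and "i < k" and "j < k"
  shows "skew_vec k N M (i, j) \<bullet> v =
    (\<Sum>m < N. M $$ (m, i) * v $ (m * k + j) - M $$ (m, j) * v $ (m * k + i))"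
proof -
  have inner: "(\<Sum>p < k. ((if p = j then a else 0) - (if p = i then b else 0)) * w p) = a * w j - b * w i"
    for a b :: 'a and w
    using assms by (simp add: left_diff_distrib sum_subtractf if_distrib[of "\<lambda>x. x * _"] cong: if_cong)
  show ?thesis
    using assms by (simp add: skew_vec_def scalar_prod_block_vec inner)
qed

lemma skew_vec_A_col:
  assumes "i < k" and "j < k" and "n < N" and "q + n < N"
  shows "skew_vec k N M (i, j) \<bullet> A_col k N M n q = 0"
proof -
  let ?c = "\<lambda>m p. if m = n then M $$ (q + n, p) else if m = q + n then M $$ (n, p) else 0"
  have "skew_vec k N M (i, j) \<bullet> A_col k N M n q =
      (\<Sum>m < N. M $$ (m, i) * ?c m j - M $$ (m, j) * ?c m i)"
    using assms by (simp add: skew_vec_scalar_prod A_col_eq_block_vec)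
  also have "\<dots> = (\<Sum>m < N. (if m = n then M $$ (n, i) * M $$ (q + n, j) - M $$ (n, j) * M $$ (q + n, i) else 0)
      + (if m = q + n then if q = 0 then 0 else M $$ (q + n, i) * M $$ (n, j) - M $$ (q + n, j) * M $$ (n, i) else 0))"
    by (rule sum.cong) auto
  also have "\<dots> = 0" using assms by (simp add: sum.distrib)
  finally show ?thesis .
qed

(* If L is a left inverse of the leading k x k block of M, the matrix V of dual_vec k N L (a, l)
   satisfies M^T V = e_a e_l^T. *)
definition dual_vec :: "nat \<Rightarrow> nat \<Rightarrow> 'a :: zero mat \<Rightarrow> nat \<times> nat \<Rightarrow> 'a vec" where
  "dual_vec k N L = (\<lambda>(a, l). block_vec k N (\<lambda>m p. if m < k \<and> p = l then L $$ (a, m) else 0))"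

lemma skew_vec_dual_vec:
  fixes M L :: "'a :: comm_ring_1 mat"
  assumes "k \<le> N" and L: "L \<in> carrier_mat k k" and inv: "L * mat k k (\<lambda>(i, j). M $$ (i, j)) = 1\<^sub>m k"
    and "i < j" "j < k" and "a < l" "l < k"
  shows "skew_vec k N M (i, j) \<bullet> dual_vec k N L (a, l) = (if (i, j) = (a, l) then 1 else 0)"
proof -
  have LM: "(\<Sum>m < k. L $$ (a, m) * M $$ (m, c)) = (if a = c then 1 else 0)" if "c < k" for c
  proof -
    have "(\<Sum>m < k. L $$ (a, m) * M $$ (m, c)) = (L * mat k k (\<lambda>(i, j). M $$ (i, j))) $$ (a, c)"
      using L that \<open>a < l\<close> \<open>l < k\<close> by (simp add: scalar_prod_def atLeast0LessThan)
    also have "\<dots> = 1\<^sub>m k $$ (a, c)" unfolding inv ..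
    finally show ?thesis using assms that by simp
  qed
  have "skew_vec k N M (i, j) \<bullet> dual_vec k N L (a, l) = (\<Sum>m < N.
      if m < k then (if j = l then L $$ (a, m) * M $$ (m, i) else 0)
        - (if i = l then L $$ (a, m) * M $$ (m, j) else 0) else 0)"
    using assms by (auto simp: skew_vec_scalar_prod dual_vec_def mult.commute intro: sum.cong)
  also have "\<dots> = (\<Sum>m < k. (if j = l then L $$ (a, m) * M $$ (m, i) else 0)
        - (if i = l then L $$ (a, m) * M $$ (m, j) else 0))"
    using \<open>k \<le> N\<close> by (simp add: sum.If_cases Int_absorb1 lessThan_subset_iff flip: lessThan_def)
  also have "\<dots> = (if j = l then if a = i then 1 else 0 else 0) - (if i = l then if a = j then 1 else 0 else 0)"
    using assms by (simp add: sum_subtractf LM)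
  also have "\<dots> = (if (i, j) = (a, l) then 1 else 0)" using assms by auto
  finally show ?thesis .
qed

definition re_im_cols :: "nat \<Rightarrow> (nat \<Rightarrow> nat \<Rightarrow> complex) \<Rightarrow> nat \<Rightarrow> nat \<Rightarrow> real" where
  "re_im_cols P x m c = (if c < P then Re (x m c) else Im (x m (c - P)))"

lemma re_im_cols_cross_sum_sym:
  fixes x y :: "nat \<Rightarrow> nat \<Rightarrow> complex"
  assumes sym: "\<And>a b. a < P \<Longrightarrow> b < P \<Longrightarrow> (\<Sum>m<N. x m a * y m b) = (\<Sum>m<N. x m b * y m a)"
    and herm: "\<And>a b. a < P \<Longrightarrow> b < P \<Longrightarrow>
      (\<Sum>m<N. cnj (x m a) * y m b) = cnj (\<Sum>m<N. cnj (x m b) * y m a)"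
    and "i < 2 * P" and "j < 2 * P"
  shows "(\<Sum>m<N. re_im_cols P x m i * re_im_cols P y m j) = (\<Sum>m<N. re_im_cols P x m j * re_im_cols P y m i)"
proof -
  define rr where "rr a b = (\<Sum>m<N. Re (x m a) * Re (y m b))" for a b
  define ii where "ii a b = (\<Sum>m<N. Im (x m a) * Im (y m b))" for a b
  define ri where "ri a b = (\<Sum>m<N. Re (x m a) * Im (y m b))" for a b
  define ir where "ir a b = (\<Sum>m<N. Im (x m a) * Re (y m b))" for a b
  have parts: "rr a b = rr b a" "ii a b = ii b a" "ri a b = ir b a" if "a < P" "b < P" for a b
  proof -
    have "rr a b - ii a b = rr b a - ii b a" "ri a b + ir a b = ri b a + ir b a"
      using arg_cong[OF sym[OF that], of Re] arg_cong[OF sym[OF that], of Im]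
      by (simp_all add: rr_def ii_def ri_def ir_def Re_sum Im_sum sum_subtractf sum.distrib)
    moreover have "rr a b + ii a b = rr b a + ii b a" "ri a b - ir a b = ir b a - ri b a"
      using arg_cong[OF herm[OF that], of Re] arg_cong[OF herm[OF that], of Im]
      by (simp_all add: rr_def ii_def ri_def ir_def Re_sum Im_sum sum_subtractf sum.distrib sum_negf)
    ultimately show "rr a b = rr b a" "ii a b = ii b a" "ri a b = ir b a" by linarith+
  qed
  consider "i < P" "j < P" | "i < P" "j - P < P" "\<not> j < P" | "i - P < P" "\<not> i < P" "j < P"
    | "i - P < P" "\<not> i < P" "j - P < P" "\<not> j < P"
    using assms(3,4) by linarith
  then show ?thesis
  proof cases
    case 1
    then show ?thesis using parts(1)[of i j] by (simp add: re_im_cols_def rr_def)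
  next
    case 2
    then show ?thesis using parts(3)[of i "j - P"] by (simp add: re_im_cols_def ri_def ir_def mult.commute)
  next
    case 3
    then show ?thesis using parts(3)[of j "i - P"] by (simp add: re_im_cols_def ri_def ir_def mult.commute)
  next
    case 4
    then show ?thesis using parts(2)[of "i - P" "j - P"] by (simp add: re_im_cols_def ii_def)
  qed
qed

lemma transpose_cross_sum_sym:
  fixes H u :: "nat \<Rightarrow> nat \<Rightarrow> complex" and c :: complex
  assumes h: "(\<Sum>m<N. u m a * cnj (H b m)) = (\<Sum>m<N. u m b * cnj (H a m))"
  shows "(\<Sum>m<N. c * (cnj (H a m) + u m a) * (u m b - cnj (H b m)))
       = (\<Sum>m<N. c * (cnj (H b m) + u m b) * (u m a - cnj (H a m)))"
proof -
  have expand: "(\<Sum>m<N. c * (cnj (H a m) + u m a) * (u m b - cnj (H b m)))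
    = c * ((\<Sum>m<N. u m b * cnj (H a m)) - (\<Sum>m<N. cnj (H a m) * cnj (H b m))
      + (\<Sum>m<N. u m a * u m b) - (\<Sum>m<N. u m a * cnj (H b m)))" for a b
    by (simp add: sum_distrib_left sum.distrib sum_subtractf algebra_simps)
  show ?thesis unfolding expand[of a b] expand[of b a] h by (simp add: mult.commute)
qed

lemma adjoint_cross_sum_herm:
  fixes H u :: "nat \<Rightarrow> nat \<Rightarrow> complex" and Z0 :: real
  assumes h_ab: "(\<Sum>m<N. cnj (u m a) * u m b) = (\<Sum>m<N. H a m * cnj (H b m))"
    and h_ba: "(\<Sum>m<N. cnj (u m b) * u m a) = (\<Sum>m<N. H b m * cnj (H a m))"
  shows "(\<Sum>m<N. cnj (\<i> * Z0 * (cnj (H a m) + u m a)) * (u m b - cnj (H b m)))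
       = cnj (\<Sum>m<N. cnj (\<i> * Z0 * (cnj (H b m) + u m b)) * (u m a - cnj (H a m)))"
proof -
  have expand: "(\<Sum>m<N. cnj (\<i> * Z0 * (cnj (H a m) + u m a)) * (u m b - cnj (H b m)))
    = - \<i> * Z0 * ((\<Sum>m<N. H a m * u m b) - (\<Sum>m<N. H a m * cnj (H b m))
      + (\<Sum>m<N. cnj (u m a) * u m b) - (\<Sum>m<N. cnj (u m a) * cnj (H b m)))" for a b
  proof -
    have "(\<Sum>m<N. cnj (\<i> * Z0 * (cnj (H a m) + u m a)) * (u m b - cnj (H b m)))
        = - \<i> * Z0 * (\<Sum>m<N. (H a m + cnj (u m a)) * (u m b - cnj (H b m)))"
      by (simp add: sum_distrib_left mult.assoc)
    then show ?thesis by (simp add: algebra_simps sum.distrib sum_subtractf)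
  qed
  have conj: "(\<Sum>m<N. cnj (u m a) * cnj (H b m)) = cnj (\<Sum>m<N. H b m * u m a)" for a b
    by (simp add: mult.commute)
  show ?thesis unfolding expand[of a b] expand[of b a] h_ab h_ba conj
    by (simp add: algebra_simps)
qed

lemma mat_adjoint_carrier: "A \<in> carrier_mat r c \<Longrightarrow> mat_adjoint A \<in> carrier_mat c r"
  unfolding mat_adjoint_def by auto

lemma index_mat_adjoint:
  "A \<in> carrier_mat r c \<Longrightarrow> i < c \<Longrightarrow> j < r \<Longrightarrow> mat_adjoint A $$ (i, j) = conjugate (A $$ (j, i))"
  unfolding mat_adjoint_def by (simp add: mat_of_rows_index)

lemma Ubar_setD:
  assumes Hr: "Hr \<in> carrier_mat P NI" and U: "U \<in> Ubar_set Hr"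
  shows Ubar_set_carrier: "U \<in> carrier_mat NI P"
    and Ubar_set_gram: "a < P \<Longrightarrow> b < P \<Longrightarrow>
      (\<Sum>m<NI. cnj (U $$ (m, a)) * U $$ (m, b)) = (\<Sum>m<NI. Hr $$ (a, m) * cnj (Hr $$ (b, m)))"
    and Ubar_set_sym: "a < P \<Longrightarrow> b < P \<Longrightarrow>
      (\<Sum>m<NI. U $$ (m, a) * cnj (Hr $$ (b, m))) = (\<Sum>m<NI. U $$ (m, b) * cnj (Hr $$ (a, m)))"
proof -
  show U_carrier: "U \<in> carrier_mat NI P" using U Hr unfolding Ubar_set_def by auto
  have gram: "mat_adjoint U * U = Hr * mat_adjoint Hr"
    and sym: "transpose_mat U * mat_adjoint Hr = transpose_mat (transpose_mat U * mat_adjoint Hr)"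
    using U unfolding Ubar_set_def by auto
  note adj = mat_adjoint_carrier[OF Hr] mat_adjoint_carrier[OF U_carrier]
    index_mat_adjoint[OF Hr] index_mat_adjoint[OF U_carrier]
  have UtH: "(transpose_mat U * mat_adjoint Hr) $$ (a, b) = (\<Sum>m<NI. U $$ (m, a) * cnj (Hr $$ (b, m)))"
    if "a < P" "b < P" for a b
    using that Hr U_carrier adj by (simp add: scalar_prod_def atLeast0LessThan)
  show "(\<Sum>m<NI. cnj (U $$ (m, a)) * U $$ (m, b)) = (\<Sum>m<NI. Hr $$ (a, m) * cnj (Hr $$ (b, m)))"
    if ab: "a < P" "b < P"
  proof -
    have "(\<Sum>m<NI. cnj (U $$ (m, a)) * U $$ (m, b)) = (mat_adjoint U * U) $$ (a, b)"
      using ab Hr U_carrier adj by (simp add: scalar_prod_def atLeast0LessThan)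
    also have "\<dots> = (\<Sum>m<NI. Hr $$ (a, m) * cnj (Hr $$ (b, m)))"
      unfolding gram using ab Hr U_carrier adj by (simp add: scalar_prod_def atLeast0LessThan)
    finally show ?thesis .
  qed
  show "(\<Sum>m<NI. U $$ (m, a) * cnj (Hr $$ (b, m))) = (\<Sum>m<NI. U $$ (m, b) * cnj (Hr $$ (a, m)))"
    if ab: "a < P" "b < P"
  proof -
    have "transpose_mat (transpose_mat U * mat_adjoint Hr) $$ (a, b)
        = (transpose_mat U * mat_adjoint Hr) $$ (b, a)"
      using ab Hr U_carrier adj by simp
    then show ?thesis using sym UtH[OF ab] UtH[OF ab(2,1)] by metis
  qed
qed

lemma M_mat_Gamma_mat_cross_sum_sym:
  assumes Hr: "Hr \<in> carrier_mat P NI" and U: "U \<in> Ubar_set Hr"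
    and i: "i < 2 * P" and j: "j < 2 * P"
  shows "(\<Sum>m<NI. M_mat Z0 Hr U $$ (m, i) * Gamma_mat Hr U $$ (m, j))
       = (\<Sum>m<NI. M_mat Z0 Hr U $$ (m, j) * Gamma_mat Hr U $$ (m, i))"
proof -
  note U_carrier = Ubar_set_carrier[OF Hr U]
  define x where "x m a = \<i> * complex_of_real Z0 * (cnj (Hr $$ (a, m)) + U $$ (m, a))" for m a
  define y where "y m b = U $$ (m, b) - cnj (Hr $$ (b, m))" for m b
  have M: "M_mat Z0 Hr U $$ (m, c) = re_im_cols P x m c"
    and G: "Gamma_mat Hr U $$ (m, c) = re_im_cols P y m c" if "m < NI" "c < 2 * P" for m c
    using that Hr U_carrier mat_adjoint_carrier[OF Hr]
    by (auto simp: M_mat_def Gamma_mat_def Let_def re_im_cols_def x_def y_def index_mat_adjoint[OF Hr])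
  have "(\<Sum>m<NI. re_im_cols P x m i * re_im_cols P y m j) = (\<Sum>m<NI. re_im_cols P x m j * re_im_cols P y m i)"
  proof (rule re_im_cols_cross_sum_sym[OF _ _ i j])
    fix a b assume ab: "a < P" "b < P"
    show "(\<Sum>m<NI. x m a * y m b) = (\<Sum>m<NI. x m b * y m a)"
      unfolding x_def y_def
      by (rule transpose_cross_sum_sym) (rule Ubar_set_sym[OF Hr U ab])
    show "(\<Sum>m<NI. cnj (x m a) * y m b) = cnj (\<Sum>m<NI. cnj (x m b) * y m a)"
      unfolding x_def y_def
      using Ubar_set_gram[OF Hr U ab] Ubar_set_gram[OF Hr U ab(2,1)] by (rule adjoint_cross_sum_herm)
  qed
  then show ?thesis using i j by (simp add: M G)
qed

definition skew_mat :: "nat \<Rightarrow> nat \<Rightarrow> 'a :: comm_ring_1 mat \<Rightarrow> 'a mat" where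
  "skew_mat k N M = mat_of_rows (N * k) (map (skew_vec k N M) (strict_upper_pairs k))"

definition dual_mat :: "nat \<Rightarrow> nat \<Rightarrow> 'a :: zero mat \<Rightarrow> 'a mat" where
  "dual_mat k N L = mat_of_cols (N * k) (map (dual_vec k N L) (strict_upper_pairs k))"

lemma skew_mat_carrier: "skew_mat k N M \<in> carrier_mat (length (strict_upper_pairs k)) (N * k)"
  unfolding skew_mat_def by (metis mat_of_rows_carrier(1) length_map)

lemma dual_mat_carrier: "dual_mat k N L \<in> carrier_mat (N * k) (length (strict_upper_pairs k))"
  unfolding dual_mat_def by (metis mat_of_cols_carrier(1) length_map)

lemma row_skew_mat:
  "s < length (strict_upper_pairs k) \<Longrightarrow> row (skew_mat k N M) s = skew_vec k N M (strict_upper_pairs k ! s)"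
  unfolding skew_mat_def by (simp add: skew_vec_def case_prod_beta)

lemma col_dual_mat:
  "s < length (strict_upper_pairs k) \<Longrightarrow> col (dual_mat k N L) s = dual_vec k N L (strict_upper_pairs k ! s)"
  unfolding dual_mat_def by (simp add: dual_vec_def case_prod_beta)

lemma strict_upper_pairs_nth:
  assumes "s < length (strict_upper_pairs k)"
  obtains i j where "strict_upper_pairs k ! s = (i, j)" and "i < j" and "j < k"
  using nth_mem[OF assms] by (auto simp: set_strict_upper_pairs)

lemma band_positions_nth:
  assumes "t < length (band_positions k N)"
  obtains n q where "band_positions k N ! t = (n, q)" and "n < N" and "q < min k (N - n)"
  using nth_mem[OF assms] by (auto simp: set_band_positions)

lemma skew_mat_mult_A_mat:
  "skew_mat k N M * A_mat k N M = 0\<^sub>m (length (strict_upper_pairs k)) (length (band_positions k N))"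
  (is "_ = ?Z")
proof (rule eq_matI)
  fix s t assume s: "s < dim_row ?Z" and t: "t < dim_col ?Z"
  obtain i j where ij: "strict_upper_pairs k ! s = (i, j)" "i < j" "j < k"
    using s by (auto elim: strict_upper_pairs_nth)
  obtain n q where nq: "band_positions k N ! t = (n, q)" "n < N" "q < min k (N - n)"
    using t by (auto elim: band_positions_nth)
  have "col (A_mat k N M) t = A_col k N M n q"
    using t A_mat_carrier[of k N M] nq(1) by (simp flip: cols_nth add: cols_A_mat)
  moreover have "skew_vec k N M (i, j) \<bullet> A_col k N M n q = 0"
    using ij nq by (intro skew_vec_A_col) auto
  ultimately show "(skew_mat k N M * A_mat k N M) $$ (s, t) = ?Z $$ (s, t)"
    using s t ij(1) skew_mat_carrier[of k N M] A_mat_carrier[of k N M]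
    by (simp add: row_skew_mat)
qed (use skew_mat_carrier[of k N M] A_mat_carrier[of k N M] in auto)

lemma skew_mat_mult_dual_mat:
  fixes M L :: "'a :: comm_ring_1 mat"
  assumes "k \<le> N" and L: "L \<in> carrier_mat k k" and inv: "L * mat k k (\<lambda>(i, j). M $$ (i, j)) = 1\<^sub>m k"
  shows "skew_mat k N M * dual_mat k N L = 1\<^sub>m (length (strict_upper_pairs k))"
    (is "_ = ?I")
proof (rule eq_matI)
  fix s t assume s: "s < dim_row ?I" and t: "t < dim_col ?I"
  obtain i j where ij: "strict_upper_pairs k ! s = (i, j)" "i < j" "j < k"
    using s by (auto elim: strict_upper_pairs_nth)
  obtain a l where al: "strict_upper_pairs k ! t = (a, l)" "a < l" "l < k"
    using t by (auto elim: strict_upper_pairs_nth)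
  have "(i, j) = (a, l) \<longleftrightarrow> s = t"
    using ij(1) al(1) s t nth_eq_iff_index_eq[OF distinct_strict_upper_pairs, of s k t] by auto
  then show "(skew_mat k N M * dual_mat k N L) $$ (s, t) = ?I $$ (s, t)"
    using s t ij al skew_mat_carrier[of k N M] dual_mat_carrier[of k N L]
    by (simp add: row_skew_mat col_dual_mat skew_vec_dual_vec[OF assms])
qed (use skew_mat_carrier[of k N M] dual_mat_carrier[of k N L] in auto)

lemma rank_band_system:
  fixes M :: "real mat"
  assumes "k \<le> N"
    and minors: "\<And>m a. m + a \<le> N \<Longrightarrow> a \<le> k \<Longrightarrow> det (mat a a (\<lambda>(i, j). M $$ (m + i, j))) \<noteq> 0"
    and b: "b \<in> carrier_vec (N * k)"
    and skew_b: "\<And>i j. i < j \<Longrightarrow> j < k \<Longrightarrow> skew_vec k N M (i, j) \<bullet> b = 0"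
  shows "vec_space.rank (N * k) (mat_of_cols (N * k) (cols (A_mat k N M) @ [b]))
    = N * k - k * (k - 1) div 2"
proof -
  let ?c = "length (band_positions k N)" and ?d = "length (strict_upper_pairs k)"
  have "det (mat k k (\<lambda>(i, j). M $$ (i, j))) \<noteq> 0" using minors[of 0 k] \<open>k \<le> N\<close> by simp
  then have "mat k k (\<lambda>(i, j). M $$ (i, j)) \<in> Units (ring_mat TYPE(real) k undefined)"
    by (intro det_non_zero_imp_unit) auto
  then obtain L where L: "L \<in> carrier_mat k k" "L * mat k k (\<lambda>(i, j). M $$ (i, j)) = 1\<^sub>m k"
    unfolding Units_def ring_mat_def by auto
  have "N * k = ?c + ?d"
    using length_band_positions[OF \<open>k \<le> N\<close>] by (simp add: length_strict_upper_pairs)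
  moreover have "skew_mat k N M *\<^sub>v b = 0\<^sub>v ?d"
    using b skew_b skew_mat_carrier[of k N M]
    by (intro eq_vecI) (auto simp: row_skew_mat elim: strict_upper_pairs_nth)
  ultimately obtain \<alpha> where \<alpha>: "\<alpha> \<in> carrier_vec ?c" "b = A_mat k N M *\<^sub>v \<alpha>"
    using exists_mult_mat_vec_eq_if_annihilated[OF A_mat_carrier dual_mat_carrier skew_mat_carrier _
        skew_mat_mult_A_mat skew_mat_mult_dual_mat[OF \<open>k \<le> N\<close> L] A_mat_mult_vec_eq_0_imp_eq_0[OF minors] b]
    by blast
  then have "vec_space.rank (N * k) (mat_of_cols (N * k) (cols (A_mat k N M) @ [b])) = ?c"
    using rank_mat_of_cols_append_mult_mat_vec[OF A_mat_carrier A_mat_mult_vec_eq_0_imp_eq_0[OF minors]]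
    by simp
  then show ?thesis using length_band_positions[OF \<open>k \<le> N\<close>] by simp
qed

lemma pick_atLeastLessThan: "i < a \<Longrightarrow> pick {m..<m + a} i = m + i"
proof -
  assume "i < a"
  then have "{x \<in> {m..<m + a}. x < m + i} = {m..<m + i}" by auto
  then show ?thesis using pick_card_in_set[of "m + i" "{m..<m + a}"] \<open>i < a\<close> by simp
qed

lemma submatrix_atLeastLessThan_lessThan:
  assumes "A \<in> carrier_mat nr nc" and "m + a \<le> nr" and "a \<le> nc"
  shows "submatrix A {m..<m + a} {..<a} = mat a a (\<lambda>(i, j). A $$ (m + i, j))"
proof -
  have rows: "{i. i < dim_row A \<and> i \<in> {m..<m + a}} = {m..<m + a}"
    and cols: "{j. j < dim_col A \<and> j \<in> {..<a}} = {..<a}"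
    using assms by auto
  have "pick {..<a} j = j" if "j < a" for j
    using pick_atLeastLessThan[OF that, of 0] by (simp add: atLeast0LessThan)
  then show ?thesis
    unfolding submatrix_def rows cols by (intro eq_matI) (auto simp: pick_atLeastLessThan)
qed

theorem lemma3:
  fixes Z0 :: real and K :: nat and Nk :: "nat \<Rightarrow> nat" and NI :: nat
    and Hr U :: "complex mat" and P \<kappa> :: nat and M G :: "real mat"
  defines "P \<equiv> (\<Sum>k = 1..K. Nk k)"
    and "\<kappa> \<equiv> 2 * P"
    and "M \<equiv> M_mat Z0 Hr U"
    and "G \<equiv> Gamma_mat Hr U"
  assumes "Z0 > 0"
    and "NI \<ge> \<kappa>"
    and "Hr \<in> carrier_mat P NI"
    and "U \<in> Ubar_set Hr"
    and "\<forall>I J. I \<subseteq> {..<NI} \<longrightarrow> J \<subseteq> {..<\<kappa>} \<longrightarrow> card I = card J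
           \<longrightarrow> det (submatrix M I J) \<noteq> 0"
  shows "vec_space.rank (NI * \<kappa>)
           (mat_of_cols (NI * \<kappa>) (cols (A_mat \<kappa> NI M) @ [b_vec \<kappa> NI G]))
         = NI * \<kappa> - \<kappa> * (\<kappa> - 1) div 2"
proof (rule rank_band_system)
  note Hr = assms(7) and U = assms(8)
  have M: "M \<in> carrier_mat NI \<kappa>"
    using Hr Ubar_set_carrier[OF Hr U] mat_adjoint_carrier[OF Hr]
    unfolding M_def M_mat_def \<kappa>_def by (simp add: Let_def)
  show "det (mat a a (\<lambda>(i, j). M $$ (m + i, j))) \<noteq> 0" if "m + a \<le> NI" "a \<le> \<kappa>" for m a
  proof -
    have "det (submatrix M {m..<m + a} {..<a}) \<noteq> 0"
      using assms(9)[rule_format, of "{m..<m + a}" "{..<a}"] that by (simp add: subset_eq)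
    then show ?thesis using submatrix_atLeastLessThan_lessThan[OF M that] by simp
  qed
  show "skew_vec \<kappa> NI M (i, j) \<bullet> b_vec \<kappa> NI G = 0" if "i < j" "j < \<kappa>" for i j
    using that M_mat_Gamma_mat_cross_sum_sym[OF Hr U, of i j Z0]
    by (simp add: skew_vec_scalar_prod b_vec_eq_block_vec sum_subtractf M_def G_def \<kappa>_def)
qed (use assms(6) in \<open>simp_all add: b_vec_def\<close>)

end
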